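(* Let $f \in \mathcal{H}$ be such that $f(t)/t^{-n} \to 0$ as $t\to\infty$ for every $n \in \mathbb{N}$. Then for all $\ell, n \in \mathbb{N}$ we have $f^{(\ell)}(t)/t^{-n} \to 0$ as $t \to\infty$.
   Context: $\mathcal{H}$ denotes the union of all Hardy fields, where a Hardy field is a subfield of the ring of germs at $+\infty$ of real-valued functions defined on half-lines $(c,\infty)$ which is closed under differentiation (so every element of $\mathcal{H}$ is eventually infinitely differentiable and its derivatives lie in $\mathcal{H}$). *)

theory Defs
  imports "HOL-Analysis.Analysis"
begin

text \<open>Germs at +infinity of real functions are represented by functions real => real;
  a set of germs is represented by a set of representatives that is closed under
  eventual equality at at_top.\<close>

definition hardy_field :: "(real \<Rightarrow> real) set \<Rightarrow> bool" where
  "hardy_field F \<longleftrightarrow>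
     (\<forall>f\<in>F. \<forall>g. eventually (\<lambda>t. f t = g t) at_top \<longrightarrow> g \<in> F) \<and>
     (\<lambda>_. 0) \<in> F \<and> (\<lambda>_. 1) \<in> F \<and>
     (\<forall>f\<in>F. \<forall>g\<in>F. (\<lambda>t. f t + g t) \<in> F) \<and>
     (\<forall>f\<in>F. (\<lambda>t. - f t) \<in> F) \<and>
     (\<forall>f\<in>F. \<forall>g\<in>F. (\<lambda>t. f t * g t) \<in> F) \<and>
     (\<forall>f\<in>F. \<not> eventually (\<lambda>t. f t = 0) at_top \<longrightarrow>
        (\<exists>g\<in>F. eventually (\<lambda>t. f t * g t = 1) at_top)) \<and>
     (\<forall>f\<in>F. (\<exists>c. \<forall>t>c. f differentiable (at t)) \<and> deriv f \<in> F)"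

definition hardy_union :: "(real \<Rightarrow> real) set" where
  "hardy_union = {f. \<exists>F. hardy_field F \<and> f \<in> F}"

end

theory Submission
  imports Defs
begin

text \<open>For \<open>f\<close> in a Hardy field, \<open>f'\<close> and \<open>f''\<close> are eventually of constant sign,
  so \<open>\<bar>f'\<bar>\<close> is eventually monotone. The mean value theorem on \<open>[t/2, t]\<close> (if \<open>\<bar>f'\<bar>\<close>
  decreases) or on \<open>[t, 2t]\<close> (if it increases) then gives
  \<open>t \<bar>f' t\<bar> \<le> 2 (\<bar>f (t/2)\<bar> + \<bar>f t\<bar> + \<bar>f (2t)\<bar>)\<close>, so rapid decay passes from \<open>f\<close> to \<open>f'\<close>.
  Since Hardy fields are closed under differentiation, induction on \<open>l\<close> finishes the proof.\<close>

definition rapidly_decreasing :: "(real \<Rightarrow> real) \<Rightarrow> bool" where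
  "rapidly_decreasing g \<longleftrightarrow> (\<forall>n::nat. ((\<lambda>t. g t * t ^ n) \<longlongrightarrow> 0) at_top)"

lemma rapidly_decreasing_iff_powr:
  "rapidly_decreasing g \<longleftrightarrow> (\<forall>n::nat. ((\<lambda>t. g t / t powr (- real n)) \<longlongrightarrow> 0) at_top)"
proof -
  have "((\<lambda>t. g t / t powr (- real n)) \<longlongrightarrow> 0) at_top \<longleftrightarrow> ((\<lambda>t. g t * t ^ n) \<longlongrightarrow> 0) at_top"
    for n :: nat
    by (rule tendsto_cong, use eventually_gt_at_top[of 0] in eventually_elim)
      (simp add: powr_minus powr_realpow divide_inverse)
  then show ?thesis
    unfolding rapidly_decreasing_def by blast
qed

lemma rapidly_decreasing_scale:
  assumes "rapidly_decreasing g" and "0 < c"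
  shows "rapidly_decreasing (\<lambda>t. g (c * t))"
  unfolding rapidly_decreasing_def
proof
  fix n
  have "filterlim (\<lambda>t::real. c * t) at_top at_top"
    using \<open>0 < c\<close> by (intro filterlim_tendsto_pos_mult_at_top[OF tendsto_const]) (auto simp: filterlim_ident)
  then have "((\<lambda>t. g (c * t) * (c * t) ^ n) \<longlongrightarrow> 0) at_top"
    using assms(1) filterlim_compose unfolding rapidly_decreasing_def by blast
  then have "((\<lambda>t. inverse c ^ n * (g (c * t) * (c * t) ^ n)) \<longlongrightarrow> 0) at_top"
    by (rule tendsto_mult_right_zero)
  then show "((\<lambda>t. g (c * t) * t ^ n) \<longlongrightarrow> 0) at_top"
    using \<open>0 < c\<close> by (simp add: power_mult_distrib field_simps)
qed

lemma rapidly_decreasing_if_Suc: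
  assumes "\<And>n. ((\<lambda>t. g t * t ^ Suc n) \<longlongrightarrow> 0) at_top"
  shows "rapidly_decreasing g"
  unfolding rapidly_decreasing_def
proof
  fix n
  have "((\<lambda>t. g t * t ^ Suc n * inverse t) \<longlongrightarrow> 0 * 0) at_top"
    using assms by (intro tendsto_mult tendsto_inverse_0_at_top filterlim_ident)
  moreover have "\<forall>\<^sub>F t in at_top. g t * t ^ Suc n * inverse t = g t * t ^ n"
    using eventually_gt_at_top[of 0] by (rule eventually_mono) auto
  ultimately show "((\<lambda>t. g t * t ^ n) \<longlongrightarrow> 0) at_top"
    by (simp add: Lim_transform_eventually)
qed

lemma MVT_abs_bound:
  fixes g g' :: "real \<Rightarrow> real"
  assumes "x < y"
    and "\<And>z. x \<le> z \<Longrightarrow> z \<le> y \<Longrightarrow> (g has_real_derivative g' z) (at z)"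
    and "\<And>z. x < z \<Longrightarrow> z < y \<Longrightarrow> m \<le> \<bar>g' z\<bar>"
  shows "m * (y - x) \<le> \<bar>g x\<bar> + \<bar>g y\<bar>"
proof -
  obtain z where z: "x < z" "z < y" "g y - g x = (y - x) * g' z"
    using MVT2[OF assms(1,2)] by blast
  then have "m * (y - x) \<le> \<bar>g y - g x\<bar>"
    using assms(1,3) by (simp add: abs_mult mult_right_mono mult.commute)
  also have "\<dots> \<le> \<bar>g x\<bar> + \<bar>g y\<bar>"
    by (simp add: abs_triangle_ineq4 add.commute)
  finally show ?thesis .
qed

lemma abs_deriv_mult_le:
  fixes g g' :: "real \<Rightarrow> real"
  assumes deriv: "\<And>x. a \<le> x \<Longrightarrow> (g has_real_derivative g' x) (at x)"
    and mono: "mono_on {a..} (\<lambda>x. \<bar>g' x\<bar>) \<or> antimono_on {a..} (\<lambda>x. \<bar>g' x\<bar>)"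
    and "0 < t" and "a \<le> t / 2"
  shows "\<bar>g' t\<bar> * t \<le> 2 * (\<bar>g (t / 2)\<bar> + \<bar>g t\<bar> + \<bar>g (2 * t)\<bar>)"
  using mono
proof
  assume inc: "mono_on {a..} (\<lambda>x. \<bar>g' x\<bar>)"
  have "\<bar>g' t\<bar> \<le> \<bar>g' z\<bar>" if "t < z" for z
    using assms(3,4) that by (intro monotone_onD[OF inc]) auto
  then have "\<bar>g' t\<bar> * (2 * t - t) \<le> \<bar>g t\<bar> + \<bar>g (2 * t)\<bar>"
    using assms(3,4) by (intro MVT_abs_bound) (auto intro: deriv)
  then show ?thesis
    using abs_ge_zero[of "g (t / 2)"] by simp
next
  assume dec: "antimono_on {a..} (\<lambda>x. \<bar>g' x\<bar>)"
  have "\<bar>g' t\<bar> \<le> \<bar>g' z\<bar>" if "t / 2 < z" "z < t" for z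
    using assms(3,4) that by (intro monotone_onD[OF dec]) auto
  then have "\<bar>g' t\<bar> * (t - t / 2) \<le> \<bar>g (t / 2)\<bar> + \<bar>g t\<bar>"
    using assms(3,4) by (intro MVT_abs_bound) (auto intro: deriv)
  then have "\<bar>g' t\<bar> * t \<le> 2 * (\<bar>g (t / 2)\<bar> + \<bar>g t\<bar>)"
    by (simp add: algebra_simps)
  then show ?thesis
    using abs_ge_zero[of "g (2 * t)"] by (simp add: algebra_simps)
qed

lemma rapidly_decreasing_deriv:
  fixes g g' :: "real \<Rightarrow> real"
  assumes "rapidly_decreasing g"
    and "\<And>x. a \<le> x \<Longrightarrow> (g has_real_derivative g' x) (at x)"
    and "mono_on {a..} (\<lambda>x. \<bar>g' x\<bar>) \<or> antimono_on {a..} (\<lambda>x. \<bar>g' x\<bar>)"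
  shows "rapidly_decreasing g'"
proof (rule rapidly_decreasing_if_Suc)
  fix n
  define G where
    "G t = 2 * (\<bar>g (t / 2) * t ^ n\<bar> + \<bar>g t * t ^ n\<bar> + \<bar>g (2 * t) * t ^ n\<bar>)" for t
  have scaled: "((\<lambda>t. \<bar>g (c * t) * t ^ n\<bar>) \<longlongrightarrow> 0) at_top" if "0 < c" for c
    using rapidly_decreasing_scale[OF assms(1) that] unfolding rapidly_decreasing_def
    by (simp add: tendsto_rabs_zero_iff)
  have "((\<lambda>t. 2 * (\<bar>g (1 / 2 * t) * t ^ n\<bar> + \<bar>g (1 * t) * t ^ n\<bar> + \<bar>g (2 * t) * t ^ n\<bar>)) \<longlongrightarrow> 0) at_top"
    using scaled[of "1 / 2"] scaled[of 1] scaled[of 2]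
    by (intro tendsto_mult_right_zero tendsto_add_zero) simp_all
  then have G_lim: "(G \<longlongrightarrow> 0) at_top"
    unfolding G_def by simp
  have bound: "\<bar>g' t * t ^ Suc n\<bar> \<le> G t" if "max 0 (2 * a) < t" for t
  proof -
    have "\<bar>g' t\<bar> * t \<le> 2 * (\<bar>g (t / 2)\<bar> + \<bar>g t\<bar> + \<bar>g (2 * t)\<bar>)"
      using that by (intro abs_deriv_mult_le[OF assms(2,3)]) auto
    then have "\<bar>g' t\<bar> * t * t ^ n \<le> 2 * (\<bar>g (t / 2)\<bar> + \<bar>g t\<bar> + \<bar>g (2 * t)\<bar>) * t ^ n"
      using that by (intro mult_right_mono) auto
    then show ?thesis
      using that unfolding G_def by (simp add: abs_mult algebra_simps)
  qed
  have "\<forall>\<^sub>F t in at_top. norm (g' t * t ^ Suc n) \<le> G t"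
    using eventually_gt_at_top[of "max 0 (2 * a)"] by (rule eventually_mono) (simp add: bound del: power_Suc)
  then show "((\<lambda>t. g' t * t ^ Suc n) \<longlongrightarrow> 0) at_top"
    using G_lim by (rule Lim_null_comparison)
qed

lemma sign_const_if_continuous_nonzero:
  fixes g :: "real \<Rightarrow> real"
  assumes "continuous_on {a..} g" and "\<And>x. a \<le> x \<Longrightarrow> g x \<noteq> 0"
  shows "(\<forall>x\<ge>a. 0 < g x) \<or> (\<forall>x\<ge>a. g x < 0)"
proof (rule ccontr)
  assume "\<not> ?thesis"
  then obtain x y where "a \<le> x" "g x \<le> 0" "a \<le> y" "0 \<le> g y"
    by (auto simp: not_less)
  moreover have "connected (g ` {a..})"
    using assms(1) by (rule connected_continuous_image) simp
  ultimately have "0 \<in> g ` {a..}"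
    using connectedD_interval[of "g ` {a..}" "g x" "g y" 0] by simp
  then show False
    using assms(2) by auto
qed

lemma monotone_on_if_deriv_sign:
  fixes h h' :: "real \<Rightarrow> real"
  assumes deriv: "\<And>x. a \<le> x \<Longrightarrow> (h has_real_derivative h' x) (at x)"
    and "(\<forall>x\<ge>a. 0 \<le> h' x) \<or> (\<forall>x\<ge>a. h' x \<le> 0)"
  shows "mono_on {a..} h \<or> antimono_on {a..} h"
  using assms(2)
proof
  assume nonneg: "\<forall>x\<ge>a. 0 \<le> h' x"
  have "h x \<le> h y" if "x \<in> {a..}" "x \<le> y" for x y
    using \<open>x \<le> y\<close>
  proof (rule DERIV_nonneg_imp_nondecreasing)
    fix z assume "x \<le> z"
    then have "a \<le> z" using that(1) by simp
    then show "\<exists>d. (h has_real_derivative d) (at z) \<and> 0 \<le> d"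
      using deriv nonneg by blast
  qed
  then show ?thesis
    by (intro disjI1 monotone_onI) auto
next
  assume nonpos: "\<forall>x\<ge>a. h' x \<le> 0"
  have "h y \<le> h x" if "x \<in> {a..}" "x \<le> y" for x y
    using \<open>x \<le> y\<close>
  proof (rule DERIV_nonpos_imp_nonincreasing)
    fix z assume "x \<le> z"
    then have "a \<le> z" using that(1) by simp
    then show "\<exists>d. (h has_real_derivative d) (at z) \<and> d \<le> 0"
      using deriv nonpos by blast
  qed
  then show ?thesis
    by (intro disjI2 monotone_onI) auto
qed

lemma monotone_on_abs_if_sign:
  fixes h :: "'a::order \<Rightarrow> real"
  assumes "mono_on S h \<or> antimono_on S h"
    and "(\<forall>x\<in>S. 0 \<le> h x) \<or> (\<forall>x\<in>S. h x \<le> 0)"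
  shows "mono_on S (\<lambda>x. \<bar>h x\<bar>) \<or> antimono_on S (\<lambda>x. \<bar>h x\<bar>)"
  using assms(2)
proof
  assume "\<forall>x\<in>S. 0 \<le> h x"
  then show ?thesis
    using assms(1) unfolding monotone_on_def by auto
next
  assume "\<forall>x\<in>S. h x \<le> 0"
  then show ?thesis
    using assms(1) unfolding monotone_on_def by (metis abs_of_nonpos neg_le_iff_le)
qed

lemma hardy_field_deriv:
  "hardy_field F \<Longrightarrow> g \<in> F \<Longrightarrow> deriv g \<in> F"
  unfolding hardy_field_def by blast

lemma hardy_field_eventually_differentiable:
  assumes "hardy_field F" and "g \<in> F"
  shows "\<forall>\<^sub>F x in at_top. g differentiable (at x)"
proof -
  obtain c where "\<forall>x>c. g differentiable (at x)"
    using assms unfolding hardy_field_def by fast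
  then show ?thesis
    unfolding eventually_at_top_dense by blast
qed

lemma hardy_field_eventually_has_deriv:
  assumes "hardy_field F" and "g \<in> F"
  shows "\<forall>\<^sub>F x in at_top. (g has_real_derivative deriv g x) (at x)"
  using hardy_field_eventually_differentiable[OF assms]
  by (rule eventually_mono) (simp add: DERIV_deriv_iff_real_differentiable)

lemma hardy_field_eventually_zero_or_nonzero:
  assumes "hardy_field F" and "g \<in> F"
  shows "(\<forall>\<^sub>F x in at_top. g x = 0) \<or> (\<forall>\<^sub>F x in at_top. g x \<noteq> 0)"
proof (cases "\<forall>\<^sub>F x in at_top. g x = 0")
  case False
  then obtain h where "\<forall>\<^sub>F x in at_top. g x * h x = 1"
    using assms unfolding hardy_field_def by fast
  then have "\<forall>\<^sub>F x in at_top. g x \<noteq> 0"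
    by (rule eventually_mono) auto
  then show ?thesis ..
qed simp

lemma hardy_field_eventually_sign:
  assumes "hardy_field F" and "g \<in> F"
  shows "\<exists>a. (\<forall>x\<ge>a. 0 \<le> g x) \<or> (\<forall>x\<ge>a. g x \<le> 0)"
  using hardy_field_eventually_zero_or_nonzero[OF assms]
proof
  assume "\<forall>\<^sub>F x in at_top. g x = 0"
  then obtain a where "\<forall>x\<ge>a. g x = 0"
    unfolding eventually_at_top_linorder by blast
  then show ?thesis
    by (metis order.refl)
next
  assume "\<forall>\<^sub>F x in at_top. g x \<noteq> 0"
  then have "\<forall>\<^sub>F x in at_top. g x \<noteq> 0 \<and> (g has_real_derivative deriv g x) (at x)"
    using hardy_field_eventually_has_deriv[OF assms] by (rule eventually_conj)
  then obtain a where a: "\<And>x. a \<le> x \<Longrightarrow> g x \<noteq> 0 \<and> (g has_real_derivative deriv g x) (at x)"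
    unfolding eventually_at_top_linorder by blast
  then have "isCont g x" if "a \<le> x" for x
    using that DERIV_isCont by blast
  then have "continuous_on {a..} g"
    by (simp add: continuous_at_imp_continuous_on)
  then have "(\<forall>x\<ge>a. 0 < g x) \<or> (\<forall>x\<ge>a. g x < 0)"
    by (rule sign_const_if_continuous_nonzero) (use a in blast)
  then show ?thesis
    by (meson less_imp_le)
qed

lemma hardy_field_abs_deriv_monotone:
  assumes "hardy_field F" and "g \<in> F"
  shows "\<exists>a. mono_on {a..} (\<lambda>x. \<bar>deriv g x\<bar>) \<or> antimono_on {a..} (\<lambda>x. \<bar>deriv g x\<bar>)"
proof -
  have g': "deriv g \<in> F" and g'': "deriv (deriv g) \<in> F"
    using assms hardy_field_deriv by blast+
  obtain a1 where a1: "\<And>x. a1 \<le> x \<Longrightarrow> (deriv g has_real_derivative deriv (deriv g) x) (at x)"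
    using hardy_field_eventually_has_deriv[OF assms(1) g'] unfolding eventually_at_top_linorder by blast
  obtain a2 where a2: "(\<forall>x\<ge>a2. 0 \<le> deriv g x) \<or> (\<forall>x\<ge>a2. deriv g x \<le> 0)"
    using hardy_field_eventually_sign[OF assms(1) g'] by blast
  obtain a3 where a3: "(\<forall>x\<ge>a3. 0 \<le> deriv (deriv g) x) \<or> (\<forall>x\<ge>a3. deriv (deriv g) x \<le> 0)"
    using hardy_field_eventually_sign[OF assms(1) g''] by blast
  define a where "a = max a1 (max a2 a3)"
  have "(\<forall>x\<ge>a. 0 \<le> deriv (deriv g) x) \<or> (\<forall>x\<ge>a. deriv (deriv g) x \<le> 0)"
    using a3 unfolding a_def by (meson max.boundedE)
  then have "mono_on {a..} (deriv g) \<or> antimono_on {a..} (deriv g)"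
    using a1 unfolding a_def by (intro monotone_on_if_deriv_sign) simp_all
  moreover have "(\<forall>x\<in>{a..}. 0 \<le> deriv g x) \<or> (\<forall>x\<in>{a..}. deriv g x \<le> 0)"
    using a2 unfolding a_def by (meson atLeast_iff max.boundedE)
  ultimately have "mono_on {a..} (\<lambda>x. \<bar>deriv g x\<bar>) \<or> antimono_on {a..} (\<lambda>x. \<bar>deriv g x\<bar>)"
    by (rule monotone_on_abs_if_sign)
  then show ?thesis ..
qed

lemma hardy_field_rapidly_decreasing_deriv:
  assumes "hardy_field F" and "g \<in> F" and "rapidly_decreasing g"
  shows "rapidly_decreasing (deriv g)"
proof -
  obtain a1 where a1: "\<And>x. a1 \<le> x \<Longrightarrow> (g has_real_derivative deriv g x) (at x)"
    using hardy_field_eventually_has_deriv[OF assms(1,2)] unfolding eventually_at_top_linorder by blast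
  obtain a2 where "mono_on {a2..} (\<lambda>x. \<bar>deriv g x\<bar>) \<or> antimono_on {a2..} (\<lambda>x. \<bar>deriv g x\<bar>)"
    using hardy_field_abs_deriv_monotone[OF assms(1,2)] by blast
  then have "mono_on {max a1 a2..} (\<lambda>x. \<bar>deriv g x\<bar>) \<or> antimono_on {max a1 a2..} (\<lambda>x. \<bar>deriv g x\<bar>)"
    by (meson atLeast_subset_iff max.cobounded2 monotone_on_subset)
  moreover have "\<And>x. max a1 a2 \<le> x \<Longrightarrow> (g has_real_derivative deriv g x) (at x)"
    using a1 by simp
  ultimately show ?thesis
    using rapidly_decreasing_deriv[OF assms(3)] by blast
qed

theorem lemma2p5:
  fixes f :: "real \<Rightarrow> real"
  assumes "f \<in> hardy_union"
    and "\<forall>n::nat. ((\<lambda>t. f t / t powr (- real n)) \<longlongrightarrow> 0) at_top"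
  shows "\<forall>l n::nat. ((\<lambda>t. (deriv ^^ l) f t / t powr (- real n)) \<longlongrightarrow> 0) at_top"
proof -
  obtain F where F: "hardy_field F" and "f \<in> F"
    using assms(1) unfolding hardy_union_def by blast
  have "(deriv ^^ l) f \<in> F \<and> rapidly_decreasing ((deriv ^^ l) f)" for l
  proof (induction l)
    case 0
    show ?case
      using \<open>f \<in> F\<close> assms(2) by (simp add: rapidly_decreasing_iff_powr)
  next
    case (Suc l)
    then show ?case
      using hardy_field_deriv[OF F] hardy_field_rapidly_decreasing_deriv[OF F] by simp
  qed
  then show ?thesis
    using rapidly_decreasing_iff_powr by blast
qed

end
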